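(* Let $a,b\ge1$ and $P=[a]\times[b]$. Then $\sum_{p\in P}T_p^-\equiv^q \frac{[a]_q[b]_q}{[a+b]_q}$.
   Context: $[a]\times[b]=\{(i,j)\colon1\le i\le a,1\le j\le b\}$ with $(i,j)\le(i',j')$ iff $i\le i'$ and $j\le j'$. $\mathcal{J}(P)$ is the set of order ideals. For $p\in P$, $I\in\mathcal{J}(P)$: $T_p^+(I)=1$ if $p$ is minimal in $P\setminus I$, else $0$; $T_p^-(I)=1$ if $p$ is maximal in $I$, else $0$; $T_p^q=T_p^+-qT_p^-$ with $q$ an indeterminate. For $f,g\colon\mathcal{J}(P)\to\mathbb{R}(q)$, $f\equiv^q g$ means $f-g=\sum_{p\in P}c_p(q)T_p^q$ for some $c_p(q)\in\mathbb{R}(q)$; an element of $\mathbb{R}(q)$ denotes a constant function. $[m]_q=1+q+\dots+q^{m-1}$. *)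

theory Defs
  imports "HOL-Computational_Algebra.Polynomial" "HOL-Computational_Algebra.Fraction_Field"
begin

type_synonym ratfun = "real poly fract"

definition qvar :: ratfun where
  "qvar = Fract [:0, 1:] 1"

definition qint :: "nat \<Rightarrow> ratfun" where
  "qint m = (\<Sum>i<m. qvar ^ i)"

definition grid :: "nat \<Rightarrow> nat \<Rightarrow> (nat \<times> nat) set" where
  "grid a b = {(i, j). 1 \<le> i \<and> i \<le> a \<and> 1 \<le> j \<and> j \<le> b}"

definition grid_le :: "nat \<times> nat \<Rightarrow> nat \<times> nat \<Rightarrow> bool" where
  "grid_le x y \<longleftrightarrow> fst x \<le> fst y \<and> snd x \<le> snd y"

definition order_ideals :: "'a set \<Rightarrow> ('a \<Rightarrow> 'a \<Rightarrow> bool) \<Rightarrow> 'a set set" where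
  "order_ideals P le = {I. I \<subseteq> P \<and> (\<forall>x\<in>I. \<forall>y\<in>P. le y x \<longrightarrow> y \<in> I)}"

definition toggle_plus :: "'a set \<Rightarrow> ('a \<Rightarrow> 'a \<Rightarrow> bool) \<Rightarrow> 'a \<Rightarrow> 'a set \<Rightarrow> ratfun" where
  "toggle_plus P le p I =
     (if p \<in> P - I \<and> (\<forall>y\<in>P - I. le y p \<longrightarrow> y = p) then 1 else 0)"

definition toggle_minus :: "'a set \<Rightarrow> ('a \<Rightarrow> 'a \<Rightarrow> bool) \<Rightarrow> 'a \<Rightarrow> 'a set \<Rightarrow> ratfun" where
  "toggle_minus P le p I =
     (if p \<in> I \<and> (\<forall>y\<in>I. le p y \<longrightarrow> y = p) then 1 else 0)"

definition toggle_q :: "'a set \<Rightarrow> ('a \<Rightarrow> 'a \<Rightarrow> bool) \<Rightarrow> 'a \<Rightarrow> 'a set \<Rightarrow> ratfun" where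
  "toggle_q P le p I = toggle_plus P le p I - qvar * toggle_minus P le p I"

definition qequiv :: "'a set \<Rightarrow> ('a \<Rightarrow> 'a \<Rightarrow> bool) \<Rightarrow> ('a set \<Rightarrow> ratfun) \<Rightarrow> ('a set \<Rightarrow> ratfun) \<Rightarrow> bool" where
  "qequiv P le f g \<longleftrightarrow>
     (\<exists>c :: 'a \<Rightarrow> ratfun. \<forall>I\<in>order_ideals P le.
        f I - g I = (\<Sum>p\<in>P. c p * toggle_q P le p I))"

end

theory Submission
  imports Defs
begin

(* An order ideal I of [a] x [b] is a Young diagram with row lengths
   b = r 0 >= r 1 >= ... >= r a >= r (a + 1) = 0: the cell (i, j) is maximal in I iff
   j = r i > r (i + 1), and minimal outside I iff j = r i + 1 <= r (i - 1).
   With c (i, j) = ([i - 1]_q [b]_q + [j - 1]_q [a]_q - [a]_q [b]_q) / [a + b]_q, the sum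
   [a + b]_q * (SUM p. c p T_p^q(I)) splits into one term per row, and the term of row i is
   [a + b]_q times the number (0 or 1) of maximal cells of I in row i, plus Phi (i - 1) - Phi i
   for an explicit potential Phi k depending only on k, r k and r (k + 1). The potentials
   telescope to Phi 0 - Phi a = - [a]_q [b]_q. *)

lemma qvar_pos: "qvar > 0"
  unfolding qvar_def by (subst zero_less_Fract_iff) (auto simp: less_poly_def pos_poly_pCons one_pCons)

lemma qint_pos: "1 \<le> n \<Longrightarrow> qint n > 0"
  unfolding qint_def using qvar_pos by (intro sum_pos) (auto simp: lessThan_empty_iff)

lemma qint_0 [simp]: "qint 0 = 0"
  by (simp add: qint_def)

lemma qint_Suc: "qint (Suc n) = 1 + qvar * qint n"
  unfolding qint_def sum.lessThan_Suc_shift by (simp add: sum_distrib_left)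

lemma qint_Suc': "qint (Suc n) = qint n + qvar ^ n"
  by (simp add: qint_def)

lemma qint_add: "qint (m + n) = qint m + qvar ^ m * qint n"
  by (induction m) (simp_all add: qint_Suc algebra_simps)

(* The coefficient c (i, j) of the equivalence, scaled by [a + b]_q. *)
definition grid_coeff :: "nat \<Rightarrow> nat \<Rightarrow> nat \<times> nat \<Rightarrow> ratfun" where
  "grid_coeff a b p = qint (fst p - 1) * qint b + qint (snd p - 1) * qint a - qint a * qint b"

(* The potential Phi k, for row k of length l followed by a row of length l'. *)
definition row_potential :: "nat \<Rightarrow> nat \<Rightarrow> nat \<Rightarrow> nat \<Rightarrow> nat \<Rightarrow> ratfun" where
  "row_potential a b k l l' =
     (if l' < l then qint k * qint b - qint a * qint b else - qint a * qint l)"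

lemma grid_coeff_step:
  fixes k l0 l1 l2 :: nat
  assumes "l2 \<le> l1" and "l1 \<le> l0"
  shows "(if l1 < l0 then grid_coeff a b (Suc k, Suc l1) else 0)
           - qvar * (if l2 < l1 then grid_coeff a b (Suc k, l1) else 0)
         = qint (a + b) * (if l2 < l1 then 1 else 0)
           + row_potential a b k l0 l1 - row_potential a b (Suc k) l1 l2"
proof -
  have sum: "qint (a + b) = qint a + qvar ^ a * qint b"
    by (rule qint_add)
  have shift_a: "qvar * qint a = qint a + qvar ^ a - 1"
    using qint_Suc[of a] qint_Suc'[of a] by simp
  have shift: "qvar * (qint a * x) = qint a * x + qvar ^ a * x - x" for x
    using arg_cong[where f = "\<lambda>y. y * x", OF shift_a] by (simp add: algebra_simps)
  note defs = grid_coeff_def row_potential_def sum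
  show ?thesis
  proof (cases "l2 < l1")
    case True
    then obtain m where m: "l1 = Suc m"
      by (cases l1) auto
    show ?thesis
    proof (cases "l1 < l0")
      case True
      with \<open>l2 < l1\<close> show ?thesis
        unfolding defs m by (simp add: algebra_simps shift qint_Suc)
    next
      case False
      with assms have "l0 = l1" by simp
      with \<open>l2 < l1\<close> show ?thesis
        unfolding defs m by (simp add: algebra_simps shift qint_Suc)
    qed
  next
    case False
    with assms show ?thesis
      unfolding defs by (cases "l1 < l0") (simp_all add: algebra_simps qint_Suc)
  qed
qed

lemma grid_coeff_telescope:
  fixes r :: "nat \<Rightarrow> nat"
  assumes antimono: "\<And>i. r (Suc i) \<le> r i" and "r 0 = b" and "r (Suc a) = 0"
  shows "(\<Sum>i=1..a. if r i < r (i - 1) then grid_coeff a b (i, Suc (r i)) else 0)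
           - qvar * (\<Sum>i=1..a. if r (Suc i) < r i then grid_coeff a b (i, r i) else 0)
         = qint (a + b) * (\<Sum>i=1..a. if r (Suc i) < r i then 1 else 0) - qint a * qint b"
proof -
  define \<Phi> where "\<Phi> k = row_potential a b k (r k) (r (Suc k))" for k
  have partial: "(\<Sum>i=1..n. if r i < r (i - 1) then grid_coeff a b (i, Suc (r i)) else 0)
      - qvar * (\<Sum>i=1..n. if r (Suc i) < r i then grid_coeff a b (i, r i) else 0)
    = qint (a + b) * (\<Sum>i=1..n. if r (Suc i) < r i then 1 else 0) + \<Phi> 0 - \<Phi> n" for n
  proof (induction n)
    case (Suc n)
    have "r (Suc (Suc n)) \<le> r (Suc n)" "r (Suc n) \<le> r n"
      using antimono by simp_all
    from grid_coeff_step[OF this, of a b n] Suc.IH show ?case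
      by (simp add: \<Phi>_def algebra_simps)
  qed simp
  have "\<Phi> 0 = - (qint a * qint b)" and "\<Phi> a = 0"
    using assms by (auto simp: \<Phi>_def row_potential_def)
  with partial[of a] show ?thesis by simp
qed

lemma finite_down_closed_eq_atLeastAtMost_card:
  fixes S :: "nat set"
  assumes "finite S" and "0 \<notin> S" and down: "\<And>j j'. j \<in> S \<Longrightarrow> 1 \<le> j' \<Longrightarrow> j' \<le> j \<Longrightarrow> j' \<in> S"
  shows "S = {1..card S}"
proof (cases "S = {}")
  case False
  have "S = {1..Max S}"
  proof
    show "S \<subseteq> {1..Max S}"
      using assms(1,2) by (auto simp: Suc_le_eq intro!: gr0I)
    show "{1..Max S} \<subseteq> S"
      using False assms(1) down[of "Max S"] by auto
  qed
  then show ?thesis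
    by (metis card_atLeastAtMost diff_Suc_1)
qed simp

lemma grid_eq_Times: "grid a b = {1..a} \<times> {1..b}"
  by (auto simp: grid_def)

lemma mem_grid_iff: "(i, j) \<in> grid a b \<longleftrightarrow> i \<in> {1..a} \<and> j \<in> {1..b}"
  by (simp add: grid_eq_Times)

(* Row 0 counts as a full row, so that the first row needs no special case for T^+. *)
definition row_length :: "nat \<Rightarrow> (nat \<times> nat) set \<Rightarrow> nat \<Rightarrow> nat" where
  "row_length b I i = (if i = 0 then b else card {j. (i, j) \<in> I})"

context
  fixes a b :: nat and I :: "(nat \<times> nat) set"
  assumes ideal: "I \<in> order_ideals (grid a b) grid_le"
begin

private abbreviation "r \<equiv> row_length b I"

lemma grid_ideal_subset: "I \<subseteq> grid a b"
  using ideal by (simp add: order_ideals_def)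

lemma grid_ideal_down:
  assumes "(i, j) \<in> I" "1 \<le> i'" "1 \<le> j'" "i' \<le> i" "j' \<le> j"
  shows "(i', j') \<in> I"
proof -
  have "(i, j) \<in> grid a b"
    using assms(1) grid_ideal_subset by blast
  with assms(2-5) have "(i', j') \<in> grid a b"
    by (simp add: grid_def)
  moreover have "\<forall>x\<in>I. \<forall>y\<in>grid a b. grid_le y x \<longrightarrow> y \<in> I"
    using ideal by (simp add: order_ideals_def)
  ultimately show ?thesis
    using assms(1,4,5) by (simp add: grid_le_def)
qed

lemma grid_ideal_mem_iff:
  assumes "1 \<le> i"
  shows "(i, j) \<in> I \<longleftrightarrow> 1 \<le> j \<and> j \<le> r i"
proof -
  have row: "{j. (i, j) \<in> I} \<subseteq> {1..b}"
    using grid_ideal_subset by (auto simp: grid_def)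
  have "{j. (i, j) \<in> I} = {1..card {j. (i, j) \<in> I}}"
  proof (rule finite_down_closed_eq_atLeastAtMost_card)
    show "finite {j. (i, j) \<in> I}"
      using row finite_subset by blast
    show "0 \<notin> {j. (i, j) \<in> I}"
      using row by auto
    show "j' \<in> {j. (i, j) \<in> I}" if "j \<in> {j. (i, j) \<in> I}" "1 \<le> j'" "j' \<le> j" for j j'
      using that assms grid_ideal_down[of i j i j'] by simp
  qed
  also have "\<dots> = {1..r i}"
    using assms by (simp add: row_length_def)
  finally show ?thesis
    by (metis atLeastAtMost_iff mem_Collect_eq)
qed

lemma row_length_le: "r i \<le> b"
proof -
  have "{j. (i, j) \<in> I} \<subseteq> {1..b}"
    using grid_ideal_subset by (auto simp: grid_def)
  then show ?thesis
    unfolding row_length_def using card_mono[of "{1..b}"] by fastforce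
qed

lemma row_length_eq_0:
  assumes "a < i"
  shows "r i = 0"
proof -
  have "{j. (i, j) \<in> I} = {}"
    using assms grid_ideal_subset by (auto simp: grid_def)
  with assms show ?thesis
    by (simp add: row_length_def)
qed

lemma row_length_Suc_le: "r (Suc i) \<le> r i"
proof (cases "i = 0 \<or> r (Suc i) = 0")
  case True
  then show ?thesis
    using row_length_le[of "Suc i"] by (auto simp: row_length_def)
next
  case False
  then have "(Suc i, r (Suc i)) \<in> I"
    using grid_ideal_mem_iff[of "Suc i"] by simp
  then have "(i, r (Suc i)) \<in> I"
    using False grid_ideal_down[of "Suc i" _ i] by simp
  then show ?thesis
    using False grid_ideal_mem_iff[of i] by simp
qed

lemma row_length_antimono: "i \<le> i' \<Longrightarrow> r i' \<le> r i"
  by (rule lift_Suc_antimono_le[of r, OF row_length_Suc_le])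

lemma toggle_minus_grid:
  assumes "(i, j) \<in> grid a b"
  shows "toggle_minus (grid a b) grid_le (i, j) I = (if j = r i \<and> r (Suc i) < j then 1 else 0)"
proof -
  from assms have i: "1 \<le> i" and j: "1 \<le> j"
    by (simp_all add: grid_def)
  have "(i, j) \<in> I \<and> (\<forall>y\<in>I. grid_le (i, j) y \<longrightarrow> y = (i, j)) \<longleftrightarrow> j = r i \<and> r (Suc i) < j"
  proof
    assume max: "(i, j) \<in> I \<and> (\<forall>y\<in>I. grid_le (i, j) y \<longrightarrow> y = (i, j))"
    then have "(i, Suc j) \<notin> I" and "(Suc i, j) \<notin> I"
      by (auto simp: grid_le_def)
    with max show "j = r i \<and> r (Suc i) < j"
      using grid_ideal_mem_iff[OF i] grid_ideal_mem_iff[of "Suc i"] j by auto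
  next
    assume corner: "j = r i \<and> r (Suc i) < j"
    have "y = (i, j)" if "y \<in> I" and "grid_le (i, j) y" for y
    proof (cases y)
      case (Pair i' j')
      with that i have "i \<le> i'" "j \<le> j'" "j' \<le> r i'"
        using grid_ideal_mem_iff[of i' j'] by (auto simp: grid_le_def)
      with corner show ?thesis
        using Pair row_length_antimono[of i i'] row_length_antimono[of "Suc i" i']
        by (cases "i' = i") auto
    qed
    with corner show "(i, j) \<in> I \<and> (\<forall>y\<in>I. grid_le (i, j) y \<longrightarrow> y = (i, j))"
      using grid_ideal_mem_iff[OF i] j by auto
  qed
  then show ?thesis
    by (simp add: toggle_minus_def)
qed

lemma toggle_plus_grid:
  assumes grid: "(i, j) \<in> grid a b"
  shows "toggle_plus (grid a b) grid_le (i, j) I = (if j = Suc (r i) \<and> j \<le> r (i - 1) then 1 else 0)"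
proof -
  from assms have i: "1 \<le> i" and j: "1 \<le> j"
    by (simp_all add: grid_def)
  have "(i, j) \<in> grid a b - I \<and> (\<forall>y\<in>grid a b - I. grid_le y (i, j) \<longrightarrow> y = (i, j))
      \<longleftrightarrow> j = Suc (r i) \<and> j \<le> r (i - 1)"
  proof
    assume min: "(i, j) \<in> grid a b - I \<and> (\<forall>y\<in>grid a b - I. grid_le y (i, j) \<longrightarrow> y = (i, j))"
    have below: "y \<in> I" if "y \<in> grid a b" "grid_le y (i, j)" "y \<noteq> (i, j)" for y
      using min that by blast
    have "r i < j"
      using min grid_ideal_mem_iff[OF i, of j] j by auto
    moreover have "j \<le> Suc (r i)"
    proof (cases "j = 1")
      case False
      then have "(i, j - 1) \<in> I"
        by (intro below) (use grid in \<open>auto simp: grid_def grid_le_def\<close>)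
      then show ?thesis
        using grid_ideal_mem_iff[OF i, of "j - 1"] by auto
    qed simp
    moreover have "j \<le> r (i - 1)"
    proof (cases "i = 1")
      case True
      then show ?thesis
        using grid by (simp add: row_length_def grid_def)
    next
      case False
      then have "(i - 1, j) \<in> I"
        by (intro below) (use grid in \<open>auto simp: grid_def grid_le_def\<close>)
      then show ?thesis
        using grid_ideal_mem_iff[of "i - 1" j] False i by simp
    qed
    ultimately show "j = Suc (r i) \<and> j \<le> r (i - 1)"
      by simp
  next
    assume corner: "j = Suc (r i) \<and> j \<le> r (i - 1)"
    have "y = (i, j)" if "y \<in> grid a b - I" and "grid_le y (i, j)" for y
    proof (cases y)
      case (Pair i' j')
      with that have le: "i' \<le> i" "j' \<le> j" and out: "r i' < j'"
        using grid_ideal_mem_iff[of i' j'] by (auto simp: grid_le_def grid_def)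
      have "i' = i"
      proof (rule ccontr)
        assume "i' \<noteq> i"
        with le have "r (i - 1) \<le> r i'"
          using row_length_antimono[of i' "i - 1"] by simp
        with corner le out show False
          by simp
      qed
      with corner le out Pair show ?thesis
        by simp
    qed
    with corner show "(i, j) \<in> grid a b - I \<and> (\<forall>y\<in>grid a b - I. grid_le y (i, j) \<longrightarrow> y = (i, j))"
      using grid grid_ideal_mem_iff[OF i] by auto
  qed
  then show ?thesis
    by (simp add: toggle_plus_def)
qed

lemma sum_grid_toggle_minus:
  "(\<Sum>p\<in>grid a b. f p * toggle_minus (grid a b) grid_le p I)
     = (\<Sum>i=1..a. if r (Suc i) < r i then f (i, r i) else 0)"
proof -
  have "(\<Sum>j=1..b. f (i, j) * toggle_minus (grid a b) grid_le (i, j) I)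
      = (if r (Suc i) < r i then f (i, r i) else 0)" if "i \<in> {1..a}" for i
  proof -
    have "(\<Sum>j=1..b. f (i, j) * toggle_minus (grid a b) grid_le (i, j) I)
        = (\<Sum>j=1..b. if j = r i then if r (Suc i) < r i then f (i, j) else 0 else 0)"
      using that by (intro sum.cong) (auto simp: toggle_minus_grid mem_grid_iff)
    also have "\<dots> = (if r (Suc i) < r i then f (i, r i) else 0)"
      using row_length_le[of i] by (auto simp: sum.delta')
    finally show ?thesis .
  qed
  then show ?thesis
    by (simp add: grid_eq_Times sum.cartesian_product')
qed

lemma sum_grid_toggle_plus:
  "(\<Sum>p\<in>grid a b. f p * toggle_plus (grid a b) grid_le p I)
     = (\<Sum>i=1..a. if r i < r (i - 1) then f (i, Suc (r i)) else 0)"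
proof -
  have "(\<Sum>j=1..b. f (i, j) * toggle_plus (grid a b) grid_le (i, j) I)
      = (if r i < r (i - 1) then f (i, Suc (r i)) else 0)" if "i \<in> {1..a}" for i
  proof -
    have "(\<Sum>j=1..b. f (i, j) * toggle_plus (grid a b) grid_le (i, j) I)
        = (\<Sum>j=1..b. if j = Suc (r i) then if r i < r (i - 1) then f (i, j) else 0 else 0)"
      using that by (intro sum.cong) (auto simp: toggle_plus_grid mem_grid_iff)
    also have "\<dots> = (if r i < r (i - 1) then f (i, Suc (r i)) else 0)"
      using row_length_le[of "i - 1"] by (auto simp: sum.delta')
    finally show ?thesis .
  qed
  then show ?thesis
    by (simp add: grid_eq_Times sum.cartesian_product')
qed

lemma sum_grid_coeff_toggle_q:
  "(\<Sum>p\<in>grid a b. grid_coeff a b p * toggle_q (grid a b) grid_le p I)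
     = qint (a + b) * (\<Sum>p\<in>grid a b. toggle_minus (grid a b) grid_le p I) - qint a * qint b"
proof -
  have "(\<Sum>p\<in>grid a b. grid_coeff a b p * toggle_q (grid a b) grid_le p I)
      = (\<Sum>p\<in>grid a b. grid_coeff a b p * toggle_plus (grid a b) grid_le p I)
        - qvar * (\<Sum>p\<in>grid a b. grid_coeff a b p * toggle_minus (grid a b) grid_le p I)"
    by (simp add: toggle_q_def algebra_simps sum_subtractf sum_distrib_left)
  also have "\<dots> = qint (a + b) * (\<Sum>i=1..a. if r (Suc i) < r i then 1 else 0) - qint a * qint b"
    unfolding sum_grid_toggle_plus sum_grid_toggle_minus
    by (rule grid_coeff_telescope)
      (use row_length_Suc_le row_length_eq_0 in \<open>auto simp: row_length_def\<close>)
  also have "(\<Sum>i=1..a. if r (Suc i) < r i then 1 else 0)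
      = (\<Sum>p\<in>grid a b. toggle_minus (grid a b) grid_le p I)"
    using sum_grid_toggle_minus[of "\<lambda>_. 1"] by simp
  finally show ?thesis .
qed

end

theorem theorem5p11:
  fixes a b :: nat
  assumes "1 \<le> a" and "1 \<le> b"
  shows "qequiv (grid a b) grid_le
           (\<lambda>I. \<Sum>p\<in>grid a b. toggle_minus (grid a b) grid_le p I)
           (\<lambda>I. qint a * qint b / qint (a + b))"
  unfolding qequiv_def
proof (intro exI ballI)
  fix I
  assume "I \<in> order_ideals (grid a b) grid_le"
  then have "(\<Sum>p\<in>grid a b. grid_coeff a b p / qint (a + b) * toggle_q (grid a b) grid_le p I)
      = (qint (a + b) * (\<Sum>p\<in>grid a b. toggle_minus (grid a b) grid_le p I) - qint a * qint b)
        / qint (a + b)"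
    by (simp add: sum_grid_coeff_toggle_q flip: sum_divide_distrib)
  moreover have "qint (a + b) \<noteq> 0"
    using qint_pos[of "a + b"] assms by simp
  ultimately show "(\<Sum>p\<in>grid a b. toggle_minus (grid a b) grid_le p I) - qint a * qint b / qint (a + b)
      = (\<Sum>p\<in>grid a b. grid_coeff a b p / qint (a + b) * toggle_q (grid a b) grid_le p I)"
    by (simp add: field_simps)
qed

end
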